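(* Let $b\in\{0,1\}^d$ and let $q$ be the effective gradient associated with $b$. Then $H_{b'}(q)\ge 0$ (equivalently $N_{b'}(q)\le 1$) for every bitmap $b'\ge b$.
   Context: Jackson network with a tree topology on nodes $\{1,\dots,d\}$, root node $1$; $i\to j$ means node $j$ is a child of node $i$. Customers arrive from outside only at node $1$, with rate $\lambda>0$. For $i\to j$, $\mu_{i,j}>0$ is the rate at which node $i$ serves customers and sends them to node $j$; $\mu_{i,0}\ge 0$ is the rate at which node $i$ serves customers who then leave the system. Let $\mu_i=\sum_{k:i\to k}\mu_{i,k}+\mu_{i,0}>0$. Arrival rates: $\Lambda_1=\lambda$ and $\Lambda_j=\Lambda_i\mu_{i,j}/\mu_i$ if $i\to j$. Utilities $\rho_i=\Lambda_i/\mu_i$, assumed to satisfy $\max_i\rho_i<1$; also $\lambda+\sum_i\mu_i=1$. Let $\mu'_{i,0}=\Lambda_i\mu_{i,0}/\mu_i$. A bitmap $b\in\{0,1\}^d$ encodes which nodes are nonempty ($b(i)=1$) or empty ($b(i)=0$); $b'\ge b$ means $b'(i)\ge b(i)$ for all $i$. For a bitmap $b$ and $q\in\mathbb{R}^d$: $N_b(q)=\lambda e^{-q(1)/2}+\sum_{i:b(i)=1}\sum_{j:i\to j}\mu_{i,j}e^{(q(i)-q(j))/2}+\sum_{i:b(i)=1}\mu_{i,0}e^{q(i)/2}+\sum_{i:b(i)=0}\mu_i$, and $H_b(q)=-2\log N_b(q)$. Effective rates (recursively from the leaves): $M_i(b)=\mu_i$ if $b(i)=1$, and $M_i(b)=\min\big(\mu_i,\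 \sum_{k:i\to k}M_k(b)+\mu'_{i,0}\big)$ if $b(i)=0$. The effective gradient of $b$ is $q$ with $q(i)=2\log(\Lambda_i/M_i(b))$. *)

theory Defs
  imports Complex_Main
begin

text \<open>The tree is given by an edge relation E:
  E i j means j is a child of i. Routing rates mu i j (for E i j) and
  exit rates mu i 0 (index 0 is not a node, it encodes "leave the system").\<close>

definition nodes :: "nat \<Rightarrow> nat set" where
  "nodes d = {1..d}"

definition is_tree :: "nat \<Rightarrow> (nat \<Rightarrow> nat \<Rightarrow> bool) \<Rightarrow> bool" where
  "is_tree d E \<longleftrightarrow> d \<ge> 1
     \<and> (\<forall>i j. E i j \<longrightarrow> i \<in> nodes d \<and> j \<in> nodes d)
     \<and> (\<forall>i. \<not> E i 1)
     \<and> (\<forall>j \<in> nodes d. j \<noteq> 1 \<longrightarrow> (\<exists>!i. E i j))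
     \<and> (\<forall>j \<in> nodes d. (1, j) \<in> {(x, y). E x y}\<^sup>*)"

definition children :: "nat \<Rightarrow> (nat \<Rightarrow> nat \<Rightarrow> bool) \<Rightarrow> nat \<Rightarrow> nat set" where
  "children d E i = {j \<in> nodes d. E i j}"

definition mu_tot :: "nat \<Rightarrow> (nat \<Rightarrow> nat \<Rightarrow> bool) \<Rightarrow> (nat \<Rightarrow> nat \<Rightarrow> real) \<Rightarrow> nat \<Rightarrow> real" where
  "mu_tot d E mu i = (\<Sum>k\<in>children d E i. mu i k) + mu i 0"

definition arrival_rates ::
  "nat \<Rightarrow> (nat \<Rightarrow> nat \<Rightarrow> bool) \<Rightarrow> real \<Rightarrow> (nat \<Rightarrow> nat \<Rightarrow> real) \<Rightarrow> (nat \<Rightarrow> real) \<Rightarrow> bool" where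
  "arrival_rates d E lam mu Lam \<longleftrightarrow> Lam 1 = lam
     \<and> (\<forall>i j. E i j \<longrightarrow> Lam j = Lam i * mu i j / mu_tot d E mu i)"

definition mu_exit' ::
  "nat \<Rightarrow> (nat \<Rightarrow> nat \<Rightarrow> bool) \<Rightarrow> (nat \<Rightarrow> nat \<Rightarrow> real) \<Rightarrow> (nat \<Rightarrow> real) \<Rightarrow> nat \<Rightarrow> real" where
  "mu_exit' d E mu Lam i = Lam i * mu i 0 / mu_tot d E mu i"

definition effective_rates ::
  "nat \<Rightarrow> (nat \<Rightarrow> nat \<Rightarrow> bool) \<Rightarrow> (nat \<Rightarrow> nat \<Rightarrow> real) \<Rightarrow> (nat \<Rightarrow> real)
     \<Rightarrow> (nat \<Rightarrow> bool) \<Rightarrow> (nat \<Rightarrow> real) \<Rightarrow> bool" where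
  "effective_rates d E mu Lam b M \<longleftrightarrow>
     (\<forall>i \<in> nodes d.
        M i = (if b i then mu_tot d E mu i
               else min (mu_tot d E mu i)
                        ((\<Sum>k\<in>children d E i. M k) + mu_exit' d E mu Lam i)))"

definition N_fun ::
  "nat \<Rightarrow> (nat \<Rightarrow> nat \<Rightarrow> bool) \<Rightarrow> real \<Rightarrow> (nat \<Rightarrow> nat \<Rightarrow> real) \<Rightarrow> (nat \<Rightarrow> bool)
     \<Rightarrow> (nat \<Rightarrow> real) \<Rightarrow> real" where
  "N_fun d E lam mu b q =
     lam * exp (- q 1 / 2)
     + (\<Sum>i\<in>{i \<in> nodes d. b i}. \<Sum>j\<in>children d E i. mu i j * exp ((q i - q j) / 2))
     + (\<Sum>i\<in>{i \<in> nodes d. b i}. mu i 0 * exp (q i / 2))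
     + (\<Sum>i\<in>{i \<in> nodes d. \<not> b i}. mu_tot d E mu i)"

definition H_fun ::
  "nat \<Rightarrow> (nat \<Rightarrow> nat \<Rightarrow> bool) \<Rightarrow> real \<Rightarrow> (nat \<Rightarrow> nat \<Rightarrow> real) \<Rightarrow> (nat \<Rightarrow> bool)
     \<Rightarrow> (nat \<Rightarrow> real) \<Rightarrow> real" where
  "H_fun d E lam mu b q = - 2 * ln (N_fun d E lam mu b q)"

end

theory Submission
  imports Defs
begin

(*
  Write S i = (sum of M k over the children k of i) + mu'_{i,0} for the
  effective inflow of node i.  At the effective gradient, exp (q i / 2) = Lam i / M i, so
  every term of N_{b'}(q) becomes explicit:
      N_{b'}(q) = M 1 + (sum over i of X i),
  where X i = mu_i * S i / M i if b'(i) and X i = mu_i otherwise.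
  Flow conservation (Lam i = sum of Lam over the children of i + mu'_{i,0}) gives that the
  exit flows add up to lam, and since every non-root node has exactly one parent this yields
      M 1 - lam = sum over i of (M i - S i).
  With the normalisation lam + sum of mu_i = 1 we get
      N_{b'}(q) - 1 = sum over i of ((M i - S i) + (X i - mu_i)),
  and each summand is <= 0 by a case analysis on b(i) and b'(i) (using b <= b').
  Since all M i are positive, N_{b'}(q) > 0, hence H_{b'}(q) = -2 ln N_{b'}(q) >= 0.
*)

lemma is_tree_nodes:
  assumes "is_tree d E"
  shows "1 \<in> nodes d" "finite (nodes d)"
    "\<And>i j. E i j \<Longrightarrow> i \<in> nodes d \<and> j \<in> nodes d" "\<And>i. \<not> E i 1"
  using assms unfolding is_tree_def nodes_def by auto

text \<open>Every non-root node is the child of exactly one node, so summing a quantity over the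
  children of all nodes is summing it over all non-root nodes.\<close>
lemma sum_over_children:
  assumes t: "is_tree d E"
  shows "(\<Sum>i\<in>nodes d. \<Sum>k\<in>children d E i. f k) = (\<Sum>j\<in>nodes d - {1}. f j)"
proof -
  let ?P = "Sigma (nodes d) (children d E)"
  have "(\<Sum>i\<in>nodes d. \<Sum>k\<in>children d E i. f k) = (\<Sum>p\<in>?P. f (snd p))"
    using sum.Sigma[of "nodes d" "children d E" "\<lambda>i k. f k"] is_tree_nodes(2)[OF t]
    by (simp add: children_def[abs_def] split_beta)
  also have "\<dots> = (\<Sum>j\<in>snd ` ?P. f j)"
  proof (rule sum.reindex[symmetric, unfolded comp_def])
    show "inj_on snd ?P"
    proof (rule inj_onI, clarsimp simp: children_def)
      fix a j a'
      assume "E a j" "E a' j" "j \<in> nodes d"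
      moreover have "j \<noteq> 1" using \<open>E a j\<close> is_tree_nodes(4)[OF t] by auto
      ultimately show "a = a'" using t unfolding is_tree_def by metis
    qed
  qed
  also have "snd ` ?P = nodes d - {1}"
  proof
    show "snd ` ?P \<subseteq> nodes d - {1}"
      using is_tree_nodes(4)[OF t] by (auto simp: children_def)
    show "nodes d - {1} \<subseteq> snd ` ?P"
    proof
      fix j assume j: "j \<in> nodes d - {1}"
      then obtain i where "E i j" using t unfolding is_tree_def by blast
      then have "(i, j) \<in> ?P" using is_tree_nodes(3)[OF t] j by (auto simp: children_def)
      then show "j \<in> snd ` ?P" by force
    qed
  qed
  finally show ?thesis .
qed

lemma tree_child_wf:
  assumes t: "is_tree d E"
  shows "wf {(k, i). E i k}"
proof -
  let ?R = "{(x, y). E x y}"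
  define C where "C = {x. (x, x) \<in> ?R\<^sup>+}"
  text \<open>A node on a cycle has its (unique) parent on the cycle as well \<dots>\<close>
  have parent_in_C: "y \<in> C" if "E y x" "x \<in> C" for x y
  proof -
    from that(2) obtain z where z: "(x, z) \<in> ?R\<^sup>*" "E z x"
      by (auto simp: C_def dest: tranclD2)
    have "x \<noteq> 1" "x \<in> nodes d" using that(1) is_tree_nodes(3,4)[OF t] by auto
    then have "z = y" using t z(2) that(1) unfolding is_tree_def by metis
    with z(1) that(1) have "(y, y) \<in> ?R\<^sup>+"
      by (meson case_prodI mem_Collect_eq rtrancl_into_trancl2)
    then show ?thesis by (simp add: C_def)
  qed
  text \<open>\<dots> so walking back from a cycle along the path from the root puts the root on a cycle.\<close>
  have root_in_C: "1 \<in> C" if "(1, j) \<in> ?R\<^sup>*" "j \<in> C" for j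
    using that by (induction rule: rtrancl_induct) (auto intro: parent_in_C)
  have "acyclic ?R"
  proof (unfold acyclic_def, intro allI notI)
    fix x assume x: "(x, x) \<in> ?R\<^sup>+"
    then obtain z where "E z x" by (auto elim: tranclE)
    then have "(1, x) \<in> ?R\<^sup>*" using is_tree_nodes(3)[OF t] t unfolding is_tree_def by blast
    with x have "1 \<in> C" using root_in_C C_def by auto
    then obtain w where "E w 1" by (auto simp: C_def elim: tranclE)
    then show False using is_tree_nodes(4)[OF t] by auto
  qed
  then have "acyclic {(k, i). E i k}"
    using acyclic_converse[of ?R] by (simp add: converse_unfold)
  moreover have "finite {(k, i). E i k}"
    by (rule finite_subset[of _ "nodes d \<times> nodes d"])
       (use is_tree_nodes(2,3)[OF t] in auto)
  ultimately show ?thesis by (simp add: finite_acyclic_wf)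
qed

text \<open>Here m is the service rate, s the effective
  inflow and M the effective rate of a node; the summand contributed by the node to
  N - 1 is nonpositive whenever the node is at least as occupied in b' as in b.\<close>
lemma node_deficit_nonpos:
  fixes m s M :: real
  assumes M_def: "M = (if b then m else min m s)" and mono: "b \<longrightarrow> b'" and M_pos: "M > 0"
  shows "(M - s) + ((if b' then m * s / M else m) - m) \<le> 0"
proof (cases b')
  case True
  have "M = m \<or> M = s" using M_def by (auto simp: min_def)
  then have "m * s / M = m + s - M" using M_pos by auto
  then show ?thesis using True by simp
next
  case False
  then show ?thesis using M_def mono by auto
qed

definition eff_inflow ::
  "nat \<Rightarrow> (nat \<Rightarrow> nat \<Rightarrow> bool) \<Rightarrow> (nat \<Rightarrow> nat \<Rightarrow> real) \<Rightarrow> (nat \<Rightarrow> real) \<Rightarrow> (nat \<Rightarrow> real)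
     \<Rightarrow> nat \<Rightarrow> real" where
  "eff_inflow d E mu Lam M i = (\<Sum>k\<in>children d E i. M k) + mu_exit' d E mu Lam i"

text \<open>A Jackson network on a tree with positive routing and service rates.  The
  stability and normalisation conditions are not part of it: only the final theorem uses
  the normalisation.\<close>
locale tree_network =
  fixes d :: nat and E :: "nat \<Rightarrow> nat \<Rightarrow> bool" and lam :: real
    and mu :: "nat \<Rightarrow> nat \<Rightarrow> real"
  assumes tree: "is_tree d E"
    and lam_pos: "lam > 0"
    and mu_pos: "\<And>i j. E i j \<Longrightarrow> mu i j > 0"
    and mu_exit_nonneg: "\<And>i. i \<in> nodes d \<Longrightarrow> mu i 0 \<ge> 0"
    and mu_tot_pos: "\<And>i. i \<in> nodes d \<Longrightarrow> mu_tot d E mu i > 0"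
begin

lemma children_iff: "k \<in> children d E i \<longleftrightarrow> E i k"
  using is_tree_nodes(3)[OF tree] by (auto simp: children_def)

lemma finite_children: "finite (children d E i)"
  using is_tree_nodes(2)[OF tree] by (auto simp: children_def)

lemma children_nodes: "k \<in> children d E i \<Longrightarrow> k \<in> nodes d"
  by (simp add: children_def)

lemma arrival_rates_pos:
  assumes Lam: "arrival_rates d E lam mu Lam" and j: "j \<in> nodes d"
  shows "Lam j > 0"
proof -
  have "(1, j) \<in> {(x, y). E x y}\<^sup>*" using tree j by (auto simp: is_tree_def)
  then show ?thesis
  proof (induction rule: rtrancl_induct)
    case base then show ?case using Lam lam_pos by (simp add: arrival_rates_def)
  next
    case (step y z)
    then have "E y z" by simp
    then show ?case
      using Lam step.IH mu_pos[of y z] mu_tot_pos[of y] is_tree_nodes(3)[OF tree, of y z]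
      by (simp add: arrival_rates_def)
  qed
qed

lemma mu_exit'_nonneg:
  assumes "arrival_rates d E lam mu Lam" "i \<in> nodes d"
  shows "mu_exit' d E mu Lam i \<ge> 0"
  using arrival_rates_pos[OF assms] mu_tot_pos[of i] mu_exit_nonneg[of i] assms(2)
  by (simp add: mu_exit'_def)

lemma flow_conservation:
  assumes Lam: "arrival_rates d E lam mu Lam" and i: "i \<in> nodes d"
  shows "Lam i = (\<Sum>k\<in>children d E i. Lam k) + mu_exit' d E mu Lam i"
proof -
  let ?m = "mu_tot d E mu i"
  have "(\<Sum>k\<in>children d E i. Lam k) = (\<Sum>k\<in>children d E i. Lam i / ?m * mu i k)"
    using Lam by (intro sum.cong) (auto simp: children_iff arrival_rates_def)
  also have "\<dots> = Lam i / ?m * (\<Sum>k\<in>children d E i. mu i k)"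
    by (simp add: sum_distrib_left)
  finally have "(\<Sum>k\<in>children d E i. Lam k) + mu_exit' d E mu Lam i
      = Lam i / ?m * ((\<Sum>k\<in>children d E i. mu i k) + mu i 0)"
    by (simp add: mu_exit'_def algebra_simps)
  also have "\<dots> = Lam i" using mu_tot_pos[OF i] by (simp add: mu_tot_def)
  finally show ?thesis by simp
qed

lemma total_exit_flow:
  assumes Lam: "arrival_rates d E lam mu Lam"
  shows "(\<Sum>i\<in>nodes d. mu_exit' d E mu Lam i) = lam"
proof -
  have "(\<Sum>i\<in>nodes d. Lam i)
      = (\<Sum>i\<in>nodes d. (\<Sum>k\<in>children d E i. Lam k) + mu_exit' d E mu Lam i)"
    using flow_conservation[OF Lam] by (rule sum.cong[OF refl])
  also have "\<dots> = (\<Sum>j\<in>nodes d - {1}. Lam j) + (\<Sum>i\<in>nodes d. mu_exit' d E mu Lam i)"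
    by (simp add: sum.distrib sum_over_children[OF tree])
  finally have "(\<Sum>i\<in>nodes d. Lam i)
      = (\<Sum>j\<in>nodes d - {1}. Lam j) + (\<Sum>i\<in>nodes d. mu_exit' d E mu Lam i)" .
  moreover have "(\<Sum>i\<in>nodes d. Lam i) = Lam 1 + (\<Sum>j\<in>nodes d - {1}. Lam j)"
    using is_tree_nodes(1,2)[OF tree] by (simp add: sum.remove)
  ultimately show ?thesis using Lam by (simp add: arrival_rates_def)
qed

text \<open>The effective inflow of a node is positive as soon as the effective rates of its
  children are: a leaf has a positive exit rate, an inner node has a child.\<close>
lemma eff_inflow_pos:
  assumes Lam: "arrival_rates d E lam mu Lam" and i: "i \<in> nodes d"
    and children_pos: "\<And>k. k \<in> children d E i \<Longrightarrow> M k > 0"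
  shows "eff_inflow d E mu Lam M i > 0"
proof (cases "children d E i = {}")
  case True
  then have "mu i 0 > 0" using mu_tot_pos[OF i] by (simp add: mu_tot_def)
  then show ?thesis
    using True arrival_rates_pos[OF Lam i] mu_tot_pos[OF i]
    by (simp add: eff_inflow_def mu_exit'_def)
next
  case False
  then have "(\<Sum>k\<in>children d E i. M k) > 0"
    using children_pos finite_children by (simp add: sum_pos)
  then show ?thesis using mu_exit'_nonneg[OF Lam i] by (simp add: eff_inflow_def)
qed

lemma effective_rates_pos:
  assumes Lam: "arrival_rates d E lam mu Lam" and M: "effective_rates d E mu Lam b M"
  shows "i \<in> nodes d \<Longrightarrow> M i > 0"
proof (induction i rule: wf_induct[OF tree_child_wf[OF tree]])
  case (1 i)
  then have i: "i \<in> nodes d" by simp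
  have "eff_inflow d E mu Lam M i > 0"
    using 1 children_nodes by (intro eff_inflow_pos[OF Lam i]) (auto simp: children_iff)
  then show ?case
    using M mu_tot_pos[OF i] i by (auto simp: effective_rates_def eff_inflow_def)
qed

lemma effective_rates_balance:
  assumes Lam: "arrival_rates d E lam mu Lam"
  shows "M 1 - lam = (\<Sum>i\<in>nodes d. M i - eff_inflow d E mu Lam M i)"
proof -
  have "(\<Sum>i\<in>nodes d. eff_inflow d E mu Lam M i) = (\<Sum>j\<in>nodes d - {1}. M j) + lam"
    by (simp add: eff_inflow_def sum.distrib sum_over_children[OF tree] total_exit_flow[OF Lam])
  moreover have "(\<Sum>i\<in>nodes d. M i) = M 1 + (\<Sum>j\<in>nodes d - {1}. M j)"
    using is_tree_nodes(1,2)[OF tree] by (simp add: sum.remove)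
  ultimately show ?thesis by (simp add: sum_subtractf)
qed

context
  fixes Lam M q :: "nat \<Rightarrow> real" and b :: "nat \<Rightarrow> bool"
  assumes Lam: "arrival_rates d E lam mu Lam"
    and M: "effective_rates d E mu Lam b M"
    and q: "\<And>i. i \<in> nodes d \<Longrightarrow> q i = 2 * ln (Lam i / M i)"
begin

lemma exp_half_gradient: "i \<in> nodes d \<Longrightarrow> exp (q i / 2) = Lam i / M i"
  using q arrival_rates_pos[OF Lam] effective_rates_pos[OF Lam M] by simp

lemma occupied_node_term:
  assumes i: "i \<in> nodes d"
  shows "(\<Sum>j\<in>children d E i. mu i j * exp ((q i - q j) / 2)) + mu i 0 * exp (q i / 2)
    = mu_tot d E mu i * eff_inflow d E mu Lam M i / M i"
proof -
  let ?m = "mu_tot d E mu i"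
  have Mi: "M i > 0" using effective_rates_pos[OF Lam M i] .
  have "mu i j * exp ((q i - q j) / 2) = ?m * M j / M i" if "j \<in> children d E i" for j
  proof -
    have E: "E i j" and j: "j \<in> nodes d" using that children_iff children_nodes by auto
    have "exp ((q i - q j) / 2) = (Lam i / M i) / (Lam j / M j)"
      using exp_half_gradient i j by (simp add: diff_divide_distrib exp_diff)
    then show ?thesis
      using Lam E mu_pos[OF E] mu_tot_pos[OF i] arrival_rates_pos[OF Lam i] Mi
        effective_rates_pos[OF Lam M j]
      by (simp add: arrival_rates_def field_simps)
  qed
  then have "(\<Sum>j\<in>children d E i. mu i j * exp ((q i - q j) / 2))
      = ?m * (\<Sum>j\<in>children d E i. M j) / M i"
    by (simp add: sum_divide_distrib[symmetric] sum_distrib_left)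
  moreover have "mu i 0 * exp (q i / 2) = ?m * mu_exit' d E mu Lam i / M i"
    using exp_half_gradient[OF i] Mi mu_tot_pos[OF i] by (simp add: mu_exit'_def field_simps)
  ultimately show ?thesis by (simp add: eff_inflow_def add_divide_distrib distrib_left)
qed

lemma N_at_effective_gradient:
  "N_fun d E lam mu b' q = M 1 + (\<Sum>i\<in>nodes d.
      if b' i then mu_tot d E mu i * eff_inflow d E mu Lam M i / M i else mu_tot d E mu i)"
proof -
  have one: "1 \<in> nodes d" using is_tree_nodes(1)[OF tree] .
  have "exp (q 1 / 2) = lam / M 1"
    using exp_half_gradient[OF one] Lam by (simp add: arrival_rates_def)
  moreover have "exp (- q 1 / 2) = inverse (exp (q 1 / 2))" by (simp add: exp_minus[symmetric])
  ultimately have root: "lam * exp (- q 1 / 2) = M 1"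
    using lam_pos effective_rates_pos[OF Lam M one] by simp
  let ?X = "\<lambda>i. if b' i then mu_tot d E mu i * eff_inflow d E mu Lam M i / M i
    else mu_tot d E mu i"
  let ?A = "{i \<in> nodes d. b' i}" and ?B = "{i \<in> nodes d. \<not> b' i}"
  have "(\<Sum>i\<in>nodes d. ?X i) = (\<Sum>i\<in>?A. ?X i) + (\<Sum>i\<in>?B. ?X i)"
    using is_tree_nodes(2)[OF tree]
    by (subst sum.union_disjoint[symmetric]) (auto intro: sum.cong)
  also have "(\<Sum>i\<in>?A. ?X i) = (\<Sum>i\<in>?A. (\<Sum>j\<in>children d E i.
      mu i j * exp ((q i - q j) / 2)) + mu i 0 * exp (q i / 2))"
    by (rule sum.cong) (auto simp: occupied_node_term)
  also have "(\<Sum>i\<in>?B. ?X i) = (\<Sum>i\<in>?B. mu_tot d E mu i)"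
    by (rule sum.cong) auto
  finally show ?thesis unfolding N_fun_def root by (simp add: sum.distrib)
qed

end

end

theorem mainTheorem3:
  fixes d :: nat and E :: "nat \<Rightarrow> nat \<Rightarrow> bool" and lam :: real
    and mu :: "nat \<Rightarrow> nat \<Rightarrow> real" and Lam M q :: "nat \<Rightarrow> real"
    and b b' :: "nat \<Rightarrow> bool"
  assumes tree: "is_tree d E"
    and lam_pos: "lam > 0"
    and mu_pos: "\<And>i j. E i j \<Longrightarrow> mu i j > 0"
    and mu_exit_nonneg: "\<And>i. i \<in> nodes d \<Longrightarrow> mu i 0 \<ge> 0"
    and mu_tot_pos: "\<And>i. i \<in> nodes d \<Longrightarrow> mu_tot d E mu i > 0"
    and Lam: "arrival_rates d E lam mu Lam"
    and stable: "\<And>i. i \<in> nodes d \<Longrightarrow> Lam i / mu_tot d E mu i < 1"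
    and normalized: "lam + (\<Sum>i\<in>nodes d. mu_tot d E mu i) = 1"
    and M: "effective_rates d E mu Lam b M"
    and q: "\<And>i. i \<in> nodes d \<Longrightarrow> q i = 2 * ln (Lam i / M i)"
    and ge: "\<And>i. i \<in> nodes d \<Longrightarrow> b i \<Longrightarrow> b' i"
  shows "H_fun d E lam mu b' q \<ge> 0"
proof -
  interpret tree_network d E lam mu
    using assms by unfold_locales
  let ?m = "mu_tot d E mu" and ?S = "eff_inflow d E mu Lam M"
  define X where "X i = (if b' i then ?m i * ?S i / M i else ?m i)" for i
  have N: "N_fun d E lam mu b' q = M 1 + (\<Sum>i\<in>nodes d. X i)"
    using N_at_effective_gradient[OF Lam M q] by (simp add: X_def)
  have M_pos: "\<And>i. i \<in> nodes d \<Longrightarrow> M i > 0"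
    using effective_rates_pos[OF Lam M] .
  have "N_fun d E lam mu b' q - 1 = (\<Sum>i\<in>nodes d. (M i - ?S i) + (X i - ?m i))"
    using N effective_rates_balance[OF Lam, of M] normalized
    by (simp add: sum.distrib sum_subtractf algebra_simps)
  also have "\<dots> \<le> 0"
  proof (rule sum_nonpos)
    fix i assume i: "i \<in> nodes d"
    have "M i = (if b i then ?m i else min (?m i) (?S i))"
      using M i by (simp add: effective_rates_def eff_inflow_def)
    then show "(M i - ?S i) + (X i - ?m i) \<le> 0"
      unfolding X_def by (rule node_deficit_nonpos) (use ge[OF i] M_pos[OF i] in auto)
  qed
  finally have "N_fun d E lam mu b' q \<le> 1" by simp
  moreover have "X i \<ge> 0" if i: "i \<in> nodes d" for i
  proof -
    have "?S i > 0" using M_pos children_nodes by (intro eff_inflow_pos[OF Lam i]) auto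
    then show ?thesis using M_pos[OF i] mu_tot_pos[OF i] by (simp add: X_def)
  qed
  then have "N_fun d E lam mu b' q > 0"
    using N M_pos[OF is_tree_nodes(1)[OF tree]] by (simp add: add_pos_nonneg sum_nonneg)
  ultimately show ?thesis by (simp add: H_fun_def)
qed

end
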